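(* There is a nonnegative smooth function $f$ on $\mathbb{R}^d$ such that $f(x)=|x|^2$ if $|x|\le1$, $f(x)=2$ if $|x|\ge2$, and $|\nabla f(x)|+|\nabla^2f(x)|\le C_1\mathbf{1}_{\{|x|\le2\}}$ for some constant $C_1>0$; and such that for any constant $C_2>0$ there exists a constant $C_3>0$ such that for all $\delta>0$, $r\in[0,1]$ and $x,y\in\mathbb{R}^d$ with $|y|\le C_2\big((|x|+\delta)\wedge1\big)$, $$|y||\nabla f(x+ry)|\le C_3(f(x)+\delta),\qquad|y|^2|\nabla^2f(x+ry)|\le C_3(f(x)+\delta^2).$$ *)

theory Defs
  imports "HOL-Analysis.Analysis"
begin

definition pderiv_dir :: "'a::euclidean_space \<Rightarrow> ('a \<Rightarrow> real) \<Rightarrow> 'a \<Rightarrow> real" where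
  "pderiv_dir v g x = frechet_derivative g (at x) v"

fun diter :: "'a::euclidean_space list \<Rightarrow> ('a \<Rightarrow> real) \<Rightarrow> 'a \<Rightarrow> real" where
  "diter [] g = g"
| "diter (v # vs) g = pderiv_dir v (diter vs g)"

definition smooth_fun :: "('a::euclidean_space \<Rightarrow> real) \<Rightarrow> bool" where
  "smooth_fun g \<longleftrightarrow> (\<forall>vs. diter vs g differentiable_on UNIV)"

definition grad_norm :: "('a::euclidean_space \<Rightarrow> real) \<Rightarrow> 'a \<Rightarrow> real" where
  "grad_norm g x = sqrt (\<Sum>b\<in>Basis. (pderiv_dir b g x)\<^sup>2)"

definition hess_norm :: "('a::euclidean_space \<Rightarrow> real) \<Rightarrow> 'a \<Rightarrow> real" where
  "hess_norm g x = sqrt (\<Sum>b\<in>Basis. \<Sum>c\<in>Basis. (pderiv_dir b (pderiv_dir c g) x)\<^sup>2)"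

end

theory Submission
  imports Defs
begin

text \<open>Take \<open>f x = \<psi> (|x|\<^sup>2)\<close> with \<open>\<psi> t = t (1 - s t) + 2 s t\<close>, where \<open>s\<close> is a smooth
  step from \<open>0\<close> (for \<open>t \<le> 1\<close>) to \<open>1\<close> (for \<open>t \<ge> 4\<close>) built from \<open>exp (-1/t)\<close>. Then
  \<open>f \<ge> min (|x|\<^sup>2) 1\<close>. Smoothness holds because every iterated directional derivative of
  \<open>f\<close> stays in the algebra generated by linear forms and functions \<open>\<phi> (|x|\<^sup>2)\<close>, with \<open>\<phi>\<close>
  ranging over a derivative-closed algebra of real functions containing \<open>\<psi>\<close>.
  The derivatives of \<open>f\<close> vanish for \<open>|z| > 2\<close>, \<open>|\<nabla>f z| \<le> G min |z| 2\<close> and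
  \<open>|\<nabla>\<^sup>2f z| \<le> H\<close>. For the increment estimates put \<open>u = min (|x| + \<delta>) 1\<close>: then
  \<open>|y| \<le> C\<^sub>2 u\<close>, \<open>min |x + r y| 2 \<le> (2 + C\<^sub>2) u\<close>, and \<open>u\<^sup>2\<close> is at most
  \<open>4 (f x + \<delta>\<^sup>2)\<close> as well as \<open>4 (f x + \<delta>)\<close>.\<close>

definition flat :: "nat \<Rightarrow> real \<Rightarrow> real" where
  "flat k t = (if 0 < t then exp (- inverse t) / t ^ k else 0)"

lemma flat_nonneg: "0 \<le> flat k t"
  by (simp add: flat_def)

lemma flat_pos: "0 < t \<Longrightarrow> 0 < flat k t"
  by (simp add: flat_def)

lemma flat_over_id_tendsto_0: "((\<lambda>t. flat k t / t) \<longlongrightarrow> 0) (at 0)"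
proof (rule filterlim_split_at)
  have "eventually (\<lambda>t. flat k t / t = 0) (at_left 0)"
    unfolding eventually_at_filter by (auto simp: flat_def)
  then show "((\<lambda>t. flat k t / t) \<longlongrightarrow> 0) (at_left 0)"
    by (rule tendsto_eventually)
next
  have "eventually (\<lambda>s. s ^ Suc k / exp s = flat k (inverse s) / inverse s) at_top"
    using eventually_gt_at_top[of 0]
    by eventually_elim (simp add: flat_def exp_minus power_inverse divide_inverse)
  then have "((\<lambda>s. flat k (inverse s) / inverse s) \<longlongrightarrow> 0) at_top"
    using tendsto_power_div_exp_0[of "Suc k"] by (rule Lim_transform_eventually[rotated])
  then show "((\<lambda>t. flat k t / t) \<longlongrightarrow> 0) (at_right 0)"
    unfolding filterlim_at_right_to_top .
qed

lemma flat_has_real_derivative: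
  "(flat k has_real_derivative flat (k + 2) t - real k * flat (k + 1) t) (at t)"
proof -
  consider "0 < t" | "t < 0" | "t = 0" by linarith
  then show ?thesis
  proof cases
    case 1
    have "((\<lambda>t. exp (- inverse t) / t ^ k) has_real_derivative
        flat (k + 2) t - real k * flat (k + 1) t) (at t)"
      using 1 by (auto intro!: derivative_eq_intros simp: flat_def) (cases k; simp add: field_simps)
    then show ?thesis
      by (rule has_field_derivative_transform_within_open[where S="{0<..}"])
        (use 1 in \<open>auto simp: flat_def\<close>)
  next
    case 2
    have "((\<lambda>t. 0) has_real_derivative flat (k + 2) t - real k * flat (k + 1) t) (at t)"
      using 2 by (simp add: flat_def)
    then show ?thesis
      by (rule has_field_derivative_transform_within_open[where S="{..<0}"])
        (use 2 in \<open>auto simp: flat_def\<close>)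
  next
    case 3
    then show ?thesis
      using flat_over_id_tendsto_0[of k] unfolding has_field_derivative_iff
      by (simp add: flat_def)
  qed
qed

lemma flat_sum_pos: "0 < flat 0 (t - 1) + flat 0 (4 - t)"
  using flat_pos[of "t - 1" 0] flat_pos[of "4 - t" 0] flat_nonneg[of 0 "t - 1"] flat_nonneg[of 0 "4 - t"]
  by (cases "1 < t") auto

lemma flat_left_has_real_derivative:
  "((\<lambda>t. flat k (t - 1)) has_real_derivative
      flat (k + 2) (t - 1) + (- real k) * flat (k + 1) (t - 1)) (at t)"
proof -
  have "((\<lambda>t. flat k (t - 1)) has_real_derivative
      (flat (k + 2) (t - 1) - real k * flat (k + 1) (t - 1)) * 1) (at t)"
    by (rule DERIV_chain2[OF flat_has_real_derivative]) (auto intro!: derivative_eq_intros)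
  then show ?thesis by simp
qed

lemma flat_right_has_real_derivative:
  "((\<lambda>t. flat k (4 - t)) has_real_derivative
      (- 1) * (flat (k + 2) (4 - t) + (- real k) * flat (k + 1) (4 - t))) (at t)"
proof -
  have "((\<lambda>t. flat k (4 - t)) has_real_derivative
      (flat (k + 2) (4 - t) - real k * flat (k + 1) (4 - t)) * (- 1)) (at t)"
    by (rule DERIV_chain2[OF flat_has_real_derivative]) (auto intro!: derivative_eq_intros)
  then show ?thesis by simp
qed

definition deriv_closed :: "(real \<Rightarrow> real) set \<Rightarrow> bool" where
  "deriv_closed A \<longleftrightarrow> (\<forall>\<phi>\<in>A. \<exists>\<phi>'\<in>A. \<forall>t. (\<phi> has_real_derivative \<phi>' t) (at t))"

text \<open>The generators are chosen so that the set is closed under differentiation: by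
  \<open>flat_has_real_derivative\<close> the shifted flat functions differentiate into each other, and
  the derivative of an inverse power of the denominator of \<open>smooth_step\<close> is again a
  product of such terms.\<close>

inductive_set step_alg :: "(real \<Rightarrow> real) set" where
  const: "(\<lambda>t. c) \<in> step_alg"
| ident: "(\<lambda>t. t) \<in> step_alg"
| flat_left: "(\<lambda>t. flat k (t - 1)) \<in> step_alg"
| flat_right: "(\<lambda>t. flat k (4 - t)) \<in> step_alg"
| inverse_power: "(\<lambda>t. inverse (flat 0 (t - 1) + flat 0 (4 - t)) ^ m) \<in> step_alg"
| add: "\<phi> \<in> step_alg \<Longrightarrow> \<psi> \<in> step_alg \<Longrightarrow> (\<lambda>t. \<phi> t + \<psi> t) \<in> step_alg"
| mult: "\<phi> \<in> step_alg \<Longrightarrow> \<psi> \<in> step_alg \<Longrightarrow> (\<lambda>t. \<phi> t * \<psi> t) \<in> step_alg"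

lemma deriv_closed_step_alg: "deriv_closed step_alg"
  unfolding deriv_closed_def
proof
  fix \<phi> assume "\<phi> \<in> step_alg"
  then show "\<exists>\<phi>'\<in>step_alg. \<forall>t. (\<phi> has_real_derivative \<phi>' t) (at t)"
  proof (induction rule: step_alg.induct)
    case (const c)
    show ?case by (intro bexI[of _ "\<lambda>t. 0"]) (auto intro: step_alg.intros)
  next
    case ident
    show ?case by (intro bexI[of _ "\<lambda>t. 1"]) (auto intro: step_alg.intros)
  next
    case (flat_left k)
    show ?case
      by (intro bexI[of _ "\<lambda>t. flat (k + 2) (t - 1) + (- real k) * flat (k + 1) (t - 1)"]
          allI flat_left_has_real_derivative step_alg.intros)
  next
    case (flat_right k)
    show ?case
      by (intro bexI[of _ "\<lambda>t. (- 1) * (flat (k + 2) (4 - t) + (- real k) * flat (k + 1) (4 - t))"]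
          allI flat_right_has_real_derivative step_alg.intros)
  next
    case (inverse_power m)
    define g where "g t = flat 0 (t - 1) + flat 0 (4 - t)" for t
    define g' where "g' t = flat 2 (t - 1) + (- 1) * flat 2 (4 - t)" for t
    have "((\<lambda>t. inverse (g t) ^ m) has_real_derivative
        (- real m) * (inverse (g t) ^ Suc m * g' t)) (at t)" for t
    proof -
      have "(g has_real_derivative g' t) (at t)"
        unfolding g_def g'_def
        using DERIV_add[OF flat_left_has_real_derivative[of 0 t] flat_right_has_real_derivative[of 0 t]]
        by (simp add: numeral_2_eq_2)
      moreover have "g t \<noteq> 0"
        using flat_sum_pos[of t] by (simp add: g_def)
      ultimately show ?thesis
        by (auto intro!: derivative_eq_intros) (cases m; simp add: power_inverse field_simps)
    qed
    moreover have "(\<lambda>t. (- real m) * (inverse (g t) ^ Suc m * g' t)) \<in> step_alg"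
      unfolding g_def g'_def by (intro step_alg.intros)
    ultimately show ?case
      by (intro bexI[of _ "\<lambda>t. (- real m) * (inverse (g t) ^ Suc m * g' t)"]) (simp_all add: g_def)
  next
    case (add \<phi> \<psi>)
    then obtain \<phi>' \<psi>' where "\<phi>' \<in> step_alg" "\<psi>' \<in> step_alg"
      "\<forall>t. (\<phi> has_real_derivative \<phi>' t) (at t)" "\<forall>t. (\<psi> has_real_derivative \<psi>' t) (at t)"
      by blast
    then show ?case
      by (intro bexI[of _ "\<lambda>t. \<phi>' t + \<psi>' t"]) (auto intro: step_alg.intros DERIV_add)
  next
    case (mult \<phi> \<psi>)
    then obtain \<phi>' \<psi>' where "\<phi>' \<in> step_alg" "\<psi>' \<in> step_alg"
      "\<forall>t. (\<phi> has_real_derivative \<phi>' t) (at t)" "\<forall>t. (\<psi> has_real_derivative \<psi>' t) (at t)"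
      by blast
    with mult.hyps show ?case
      by (intro bexI[of _ "\<lambda>t. \<phi>' t * \<psi> t + \<psi>' t * \<phi> t"]) (auto intro: step_alg.intros DERIV_mult)
  qed
qed

lemma deriv_closed_bounded_on_compact:
  assumes "deriv_closed A" "\<phi> \<in> A" "compact S"
  obtains M where "\<And>t. t \<in> S \<Longrightarrow> \<bar>\<phi> t\<bar> \<le> M"
proof -
  have "continuous_on S \<phi>"
    using assms(1,2) unfolding deriv_closed_def
    by (metis DERIV_isCont continuous_at_imp_continuous_on)
  then have "bounded (\<phi> ` S)"
    using assms(3) by (intro compact_imp_bounded compact_continuous_image)
  then show ?thesis
    using that by (auto simp: bounded_iff)
qed

inductive_set radial_alg :: "(real \<Rightarrow> real) set \<Rightarrow> ('a::euclidean_space \<Rightarrow> real) set"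
  for A :: "(real \<Rightarrow> real) set" where
  const: "(\<lambda>x. c) \<in> radial_alg A"
| linear: "(\<lambda>x. inner x v) \<in> radial_alg A"
| comp_inner_self: "\<phi> \<in> A \<Longrightarrow> (\<lambda>x. \<phi> (inner x x)) \<in> radial_alg A"
| add: "f \<in> radial_alg A \<Longrightarrow> g \<in> radial_alg A \<Longrightarrow> (\<lambda>x. f x + g x) \<in> radial_alg A"
| mult: "f \<in> radial_alg A \<Longrightarrow> g \<in> radial_alg A \<Longrightarrow> (\<lambda>x. f x * g x) \<in> radial_alg A"

lemma has_derivative_comp_inner_self:
  assumes "(\<phi> has_real_derivative D) (at (inner x x))"
  shows "((\<lambda>x::'a::real_inner. \<phi> (inner x x)) has_derivative (\<lambda>w. D * (2 * inner x w))) (at x)"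
proof -
  have "((\<lambda>x::'a. \<phi> (inner x x)) has_derivative (\<lambda>h. (inner x h + inner h x) * D)) (at x)"
    using DERIV_compose_FDERIV[OF assms has_derivative_inner[OF has_derivative_ident has_derivative_ident]] .
  then show ?thesis
    by (simp add: inner_commute algebra_simps)
qed

lemma radial_alg_has_derivative:
  assumes "deriv_closed A" "g \<in> radial_alg A"
  shows "\<exists>D. (\<forall>x. (g has_derivative D x) (at x)) \<and> (\<forall>v. (\<lambda>x. D x v) \<in> radial_alg A)"
  using assms(2)
proof (induction rule: radial_alg.induct)
  case (const c)
  show ?case by (intro exI[of _ "\<lambda>x w. 0"]) (auto intro: radial_alg.intros)
next
  case (linear v)
  show ?case
    by (intro exI[of _ "\<lambda>x w. inner w v"]) (auto intro!: radial_alg.intros derivative_eq_intros)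
next
  case (comp_inner_self \<phi>)
  then obtain \<phi>' where "\<phi>' \<in> A" "\<forall>t. (\<phi> has_real_derivative \<phi>' t) (at t)"
    using assms(1) unfolding deriv_closed_def by blast
  then show ?case
    by (intro exI[of _ "\<lambda>x w. \<phi>' (inner x x) * (2 * inner x w)"])
      (auto intro!: radial_alg.intros has_derivative_comp_inner_self)
next
  case (add f g)
  then obtain Df Dg where "\<forall>x. (f has_derivative Df x) (at x)" "\<forall>v. (\<lambda>x. Df x v) \<in> radial_alg A"
    "\<forall>x. (g has_derivative Dg x) (at x)" "\<forall>v. (\<lambda>x. Dg x v) \<in> radial_alg A"
    by blast
  then show ?case
    by (intro exI[of _ "\<lambda>x w. Df x w + Dg x w"]) (auto intro: radial_alg.intros has_derivative_add)
next
  case (mult f g)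
  then obtain Df Dg where Df: "\<forall>x. (f has_derivative Df x) (at x)" "\<forall>v. (\<lambda>x. Df x v) \<in> radial_alg A"
    and Dg: "\<forall>x. (g has_derivative Dg x) (at x)" "\<forall>v. (\<lambda>x. Dg x v) \<in> radial_alg A"
    by blast
  have "(\<lambda>x. f x * Dg x v + Df x v * g x) \<in> radial_alg A" for v
    by (intro radial_alg.add radial_alg.mult) (simp_all add: mult.hyps Df(2) Dg(2))
  with Df(1) Dg(1) show ?case
    by (intro exI[of _ "\<lambda>x w. f x * Dg x w + Df x w * g x"]) (auto intro: has_derivative_mult)
qed

lemma pderiv_dir_radial_alg:
  assumes "deriv_closed A" "g \<in> radial_alg A"
  shows "pderiv_dir v g \<in> radial_alg A"
proof -
  obtain D where D: "\<forall>x. (g has_derivative D x) (at x)" "\<forall>v. (\<lambda>x. D x v) \<in> radial_alg A"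
    using radial_alg_has_derivative[OF assms] by blast
  have "frechet_derivative g (at x) = D x" for x
    using D(1) frechet_derivative_at by metis
  then have "pderiv_dir v g = (\<lambda>x. D x v)"
    by (simp add: pderiv_dir_def fun_eq_iff)
  then show ?thesis
    using D(2) by simp
qed

lemma smooth_fun_radial_alg:
  assumes "deriv_closed A" "g \<in> radial_alg A"
  shows "smooth_fun g"
proof -
  have "diter vs g \<in> radial_alg A" for vs
    by (induction vs) (simp_all add: assms pderiv_dir_radial_alg)
  then show ?thesis
    unfolding smooth_fun_def differentiable_on_def differentiable_def
    using radial_alg_has_derivative[OF assms(1)] by blast
qed

lemma pderiv_dir_comp_inner_self:
  assumes "\<And>t. (\<phi> has_real_derivative \<phi>' t) (at t)"
  shows "pderiv_dir c (\<lambda>x::'a::euclidean_space. \<phi> (inner x x)) x = \<phi>' (inner x x) * (2 * inner x c)"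
  unfolding pderiv_dir_def frechet_derivative_at[OF has_derivative_comp_inner_self[OF assms], symmetric]
  by simp

lemma grad_norm_comp_inner_self:
  assumes "\<And>t. (\<phi> has_real_derivative \<phi>' t) (at t)"
  shows "grad_norm (\<lambda>x::'a::euclidean_space. \<phi> (inner x x)) x = 2 * \<bar>\<phi>' (inner x x)\<bar> * norm x"
proof -
  have "(\<Sum>b\<in>Basis. (inner x b)\<^sup>2) = inner x x"
    by (simp add: euclidean_inner[of x x] power2_eq_square)
  then have "grad_norm (\<lambda>x::'a. \<phi> (inner x x)) x = sqrt ((2 * \<phi>' (inner x x))\<^sup>2 * inner x x)"
    unfolding grad_norm_def pderiv_dir_comp_inner_self[OF assms]
    by (simp add: power_mult_distrib sum_distrib_left[symmetric])
  then show ?thesis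
    by (simp add: real_sqrt_mult norm_eq_sqrt_inner)
qed

lemma pderiv_dir2_comp_inner_self:
  assumes "\<And>t. (\<phi> has_real_derivative \<phi>' t) (at t)" "\<And>t. (\<phi>' has_real_derivative \<phi>'' t) (at t)"
  shows "pderiv_dir b (pderiv_dir c (\<lambda>x::'a::euclidean_space. \<phi> (inner x x))) x
     = 2 * \<phi>' (inner x x) * inner b c + 4 * \<phi>'' (inner x x) * inner x b * inner x c"
proof -
  have "((\<lambda>x::'a. \<phi>' (inner x x) * (2 * inner x c)) has_derivative
     (\<lambda>w. \<phi>' (inner x x) * (2 * inner w c) + \<phi>'' (inner x x) * (2 * inner x w) * (2 * inner x c))) (at x)"
    using has_derivative_comp_inner_self[OF assms(2)]
    by (auto intro!: derivative_eq_intros)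
  then show ?thesis
    unfolding pderiv_dir_comp_inner_self[OF assms(1), abs_def]
    by (simp add: pderiv_dir_def frechet_derivative_at[symmetric] inner_commute algebra_simps)
qed

lemma L2_set_le_sqrt_card_mult:
  assumes "\<And>i. i \<in> A \<Longrightarrow> \<bar>f i\<bar> \<le> K"
  shows "L2_set f A \<le> sqrt (card A) * K"
proof (cases "A = {}")
  case False
  then have "0 \<le> K"
    using assms by (meson abs_ge_zero all_not_in_conv order_trans)
  have "L2_set f A = L2_set (\<lambda>i. \<bar>f i\<bar>) A"
    by (simp add: L2_set_def)
  also have "\<dots> \<le> L2_set (\<lambda>i. K) A"
    using assms by (intro L2_set_mono) auto
  finally show ?thesis
    using \<open>0 \<le> K\<close> by (simp add: L2_set_constant)
qed simp

lemma hess_norm_eq_L2_set: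
  "hess_norm g x = L2_set (\<lambda>(b, c). pderiv_dir b (pderiv_dir c g) x) (Basis \<times> Basis)"
  by (simp add: hess_norm_def L2_set_def sum.cartesian_product case_prod_beta)

lemma hess_norm_comp_inner_self_le:
  assumes "\<And>t. (\<phi> has_real_derivative \<phi>' t) (at t)" "\<And>t. (\<phi>' has_real_derivative \<phi>'' t) (at t)"
  shows "hess_norm (\<lambda>x::'a::euclidean_space. \<phi> (inner x x)) x
     \<le> DIM('a) * (2 * \<bar>\<phi>' (inner x x)\<bar> + 4 * \<bar>\<phi>'' (inner x x)\<bar> * inner x x)"
proof -
  have "\<bar>2 * \<phi>' (inner x x) * inner b c + 4 * \<phi>'' (inner x x) * inner x b * inner x c\<bar>
      \<le> 2 * \<bar>\<phi>' (inner x x)\<bar> + 4 * \<bar>\<phi>'' (inner x x)\<bar> * inner x x"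
    if "b \<in> Basis" "c \<in> Basis" for b c
  proof -
    have bc: "\<bar>\<phi>' (inner x x)\<bar> * \<bar>inner b c\<bar> \<le> \<bar>\<phi>' (inner x x)\<bar>"
      using that by (intro mult_left_le) (auto simp: inner_Basis)
    have "\<bar>inner x b\<bar> * \<bar>inner x c\<bar> \<le> norm x * norm x"
      using that by (intro mult_mono) (auto simp: Basis_le_norm)
    then have "\<bar>inner x b\<bar> * \<bar>inner x c\<bar> \<le> inner x x"
      by (simp add: power2_norm_eq_inner[symmetric] power2_eq_square)
    with bc show ?thesis
      using abs_triangle_ineq[of "2 * \<phi>' (inner x x) * inner b c" "4 * \<phi>'' (inner x x) * inner x b * inner x c"]
        mult_left_mono[of "\<bar>inner x b\<bar> * \<bar>inner x c\<bar>" "inner x x" "4 * \<bar>\<phi>'' (inner x x)\<bar>"]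
      by (simp add: abs_mult algebra_simps)
  qed
  then have "hess_norm (\<lambda>x::'a. \<phi> (inner x x)) x
      \<le> sqrt (card (Basis \<times> Basis :: ('a \<times> 'a) set)) * (2 * \<bar>\<phi>' (inner x x)\<bar> + 4 * \<bar>\<phi>'' (inner x x)\<bar> * inner x x)"
    unfolding hess_norm_eq_L2_set pderiv_dir2_comp_inner_self[OF assms]
    by (intro L2_set_le_sqrt_card_mult) auto
  then show ?thesis
    by (simp add: card_cartesian_product)
qed

definition smooth_step :: "real \<Rightarrow> real" where
  "smooth_step t = flat 0 (t - 1) / (flat 0 (t - 1) + flat 0 (4 - t))"

definition profile :: "real \<Rightarrow> real" where
  "profile t = t * (1 - smooth_step t) + 2 * smooth_step t"

lemma profile_in_step_alg: "profile \<in> step_alg"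
proof -
  have eq: "profile = (\<lambda>t. t * (1 + (- 1) * (flat 0 (t - 1) * inverse (flat 0 (t - 1) + flat 0 (4 - t)) ^ 1))
      + 2 * (flat 0 (t - 1) * inverse (flat 0 (t - 1) + flat 0 (4 - t)) ^ 1))"
    by (simp add: fun_eq_iff profile_def smooth_step_def divide_inverse)
  show ?thesis
    unfolding eq by (intro step_alg.intros)
qed

lemma smooth_step_bounds: "0 \<le> smooth_step t" "smooth_step t \<le> 1"
  using flat_nonneg[of 0 "t - 1"] flat_nonneg[of 0 "4 - t"] flat_sum_pos[of t]
  by (auto simp: smooth_step_def divide_simps)

lemma smooth_step_eq_0: "t \<le> 1 \<Longrightarrow> smooth_step t = 0"
  by (simp add: smooth_step_def flat_def)

lemma smooth_step_eq_1: "4 \<le> t \<Longrightarrow> smooth_step t = 1"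
  using flat_pos[of "t - 1" 0] by (simp add: smooth_step_def flat_def)

lemma profile_eq_id: "t \<le> 1 \<Longrightarrow> profile t = t"
  by (simp add: profile_def smooth_step_eq_0)

lemma profile_eq_2: "4 \<le> t \<Longrightarrow> profile t = 2"
  by (simp add: profile_def smooth_step_eq_1)

lemma min_le_profile:
  assumes "0 \<le> t"
  shows "min t 1 \<le> profile t"
proof (cases "t \<le> 2")
  case True
  have "profile t - t = smooth_step t * (2 - t)"
    by (simp add: profile_def algebra_simps)
  then show ?thesis
    using True smooth_step_bounds[of t] by (smt (verit) mult_nonneg_nonneg)
next
  case False
  have "profile t - 2 = (1 - smooth_step t) * (t - 2)"
    by (simp add: profile_def algebra_simps)
  then show ?thesis
    using False smooth_step_bounds[of t] by (smt (verit) mult_nonneg_nonneg)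
qed

lemma derivative_eq_0_if_locally_const:
  assumes "(f has_real_derivative D) (at t)" "open S" "t \<in> S" "\<And>s. s \<in> S \<Longrightarrow> f s = c"
  shows "D = 0"
proof -
  have "(f has_real_derivative 0) (at t)"
    by (rule has_field_derivative_transform_within_open[OF DERIV_const[of c] assms(2,3)])
      (simp add: assms(4))
  with assms(1) show ?thesis
    by (rule DERIV_unique)
qed

lemma profile_derivatives:
  obtains \<psi>1 \<psi>2 M where
    "\<And>t. (profile has_real_derivative \<psi>1 t) (at t)"
    "\<And>t. (\<psi>1 has_real_derivative \<psi>2 t) (at t)"
    "\<And>t. t \<in> {0..4} \<Longrightarrow> \<bar>\<psi>1 t\<bar> \<le> M \<and> \<bar>\<psi>2 t\<bar> \<le> M"
    "\<And>t. 4 < t \<Longrightarrow> \<psi>1 t = 0 \<and> \<psi>2 t = 0"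
proof -
  obtain \<psi>1 where \<psi>1: "\<psi>1 \<in> step_alg" "\<And>t. (profile has_real_derivative \<psi>1 t) (at t)"
    using deriv_closed_step_alg profile_in_step_alg unfolding deriv_closed_def by blast
  obtain \<psi>2 where \<psi>2: "\<psi>2 \<in> step_alg" "\<And>t. (\<psi>1 has_real_derivative \<psi>2 t) (at t)"
    using deriv_closed_step_alg \<psi>1(1) unfolding deriv_closed_def by blast
  obtain M1 M2 where "\<And>t. t \<in> {0..4} \<Longrightarrow> \<bar>\<psi>1 t\<bar> \<le> M1" "\<And>t. t \<in> {0..4} \<Longrightarrow> \<bar>\<psi>2 t\<bar> \<le> M2"
    using deriv_closed_bounded_on_compact[OF deriv_closed_step_alg] \<psi>1(1) \<psi>2(1)
    by (metis compact_Icc)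
  moreover have \<psi>1_0: "\<psi>1 t = 0" if "4 < t" for t
    using derivative_eq_0_if_locally_const[OF \<psi>1(2) open_greaterThan] that by (simp add: profile_eq_2)
  moreover have "\<psi>2 t = 0" if "4 < t" for t
    using derivative_eq_0_if_locally_const[OF \<psi>2(2) open_greaterThan] that by (simp add: \<psi>1_0)
  ultimately show ?thesis
    using that[of \<psi>1 \<psi>2 "max M1 M2"] \<psi>1(2) \<psi>2(2) by fastforce
qed

definition trunc_sq :: "'a::euclidean_space \<Rightarrow> real" where
  "trunc_sq x = profile (inner x x)"

lemma smooth_fun_trunc_sq: "smooth_fun trunc_sq"
proof -
  have "trunc_sq \<in> radial_alg step_alg"
    unfolding trunc_sq_def[abs_def] by (intro radial_alg.intros profile_in_step_alg)
  then show ?thesis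
    by (rule smooth_fun_radial_alg[OF deriv_closed_step_alg])
qed

lemma min_le_trunc_sq: "min ((norm x)\<^sup>2) 1 \<le> trunc_sq x"
  by (simp add: trunc_sq_def power2_norm_eq_inner min_le_profile)

lemma trunc_sq_eq_norm_sq: "norm x \<le> 1 \<Longrightarrow> trunc_sq x = (norm x)\<^sup>2"
  by (simp add: trunc_sq_def power2_norm_eq_inner[symmetric] power_le_one profile_eq_id)

lemma trunc_sq_eq_2: "2 \<le> norm x \<Longrightarrow> trunc_sq x = 2"
  using power_mono[of 2 "norm x" 2]
  by (simp add: trunc_sq_def power2_norm_eq_inner[symmetric] profile_eq_2)

lemma trunc_sq_derivative_bounds:
  obtains G H where "0 \<le> G" "0 \<le> H"
    "\<And>z::'a::euclidean_space. grad_norm trunc_sq z \<le> G * min (norm z) 2 * indicator {z. norm z \<le> 2} z"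
    "\<And>z::'a. hess_norm trunc_sq z \<le> H * indicator {z. norm z \<le> 2} z"
proof -
  obtain \<psi>1 \<psi>2 M where \<psi>: "\<And>t. (profile has_real_derivative \<psi>1 t) (at t)"
      "\<And>t. (\<psi>1 has_real_derivative \<psi>2 t) (at t)"
    and bounded: "\<And>t. t \<in> {0..4} \<Longrightarrow> \<bar>\<psi>1 t\<bar> \<le> M \<and> \<bar>\<psi>2 t\<bar> \<le> M"
    and vanish: "\<And>t. 4 < t \<Longrightarrow> \<psi>1 t = 0 \<and> \<psi>2 t = 0"
    using profile_derivatives by blast
  have "0 \<le> M"
    using bounded[of 0] by auto
  have trunc_sq: "trunc_sq = (\<lambda>x::'a. profile (inner x x))"
    by (simp add: trunc_sq_def[abs_def])
  have inner_le_4: "inner z z \<le> 4 \<longleftrightarrow> norm z \<le> 2" for z :: 'a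
    by (metis norm_eq_sqrt_inner real_sqrt_four real_sqrt_le_iff)
  show ?thesis
  proof (rule that[of "2 * M" "DIM('a) * (18 * M)"])
    fix z :: 'a
    show "grad_norm trunc_sq z \<le> 2 * M * min (norm z) 2 * indicator {z. norm z \<le> 2} z"
      using bounded[of "inner z z"] vanish[of "inner z z"] inner_le_4[of z] \<open>0 \<le> M\<close>
      by (cases "norm z \<le> 2")
        (auto simp: trunc_sq grad_norm_comp_inner_self[OF \<psi>(1)] intro!: mult_right_mono)
    have "hess_norm trunc_sq z \<le> DIM('a) * (2 * \<bar>\<psi>1 (inner z z)\<bar> + 4 * \<bar>\<psi>2 (inner z z)\<bar> * inner z z)"
      unfolding trunc_sq by (rule hess_norm_comp_inner_self_le[OF \<psi>])
    also have "\<dots> \<le> DIM('a) * (18 * M) * indicator {z. norm z \<le> 2} z"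
    proof (cases "norm z \<le> 2")
      case True
      then have "\<bar>\<psi>1 (inner z z)\<bar> \<le> M" "\<bar>\<psi>2 (inner z z)\<bar> * inner z z \<le> M * 4"
        using bounded[of "inner z z"] inner_le_4[of z] \<open>0 \<le> M\<close> by (auto intro: mult_mono)
      with True show ?thesis
        by (auto intro!: mult_left_mono)
    qed (use vanish[of "inner z z"] inner_le_4[of z] in auto)
    finally show "hess_norm trunc_sq z \<le> DIM('a) * (18 * M) * indicator {z. norm z \<le> 2} z" .
  qed (use \<open>0 \<le> M\<close> in auto)
qed

lemma sq_min_add_one_le:
  fixes t \<delta> F :: real
  assumes "0 \<le> t" "0 < \<delta>" "min (t\<^sup>2) 1 \<le> F"
  shows "(min (t + \<delta>) 1)\<^sup>2 \<le> 4 * (F + \<delta>\<^sup>2)" and "(min (t + \<delta>) 1)\<^sup>2 \<le> 4 * (F + \<delta>)"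
proof -
  have "0 \<le> F"
    using assms(3) by (smt (verit) zero_le_power2)
  show *: "(min (t + \<delta>) 1)\<^sup>2 \<le> 4 * (F + \<delta>\<^sup>2)"
  proof (cases "t + \<delta> \<le> 1")
    case True
    then have "t\<^sup>2 \<le> F"
      using assms by (smt (verit) power_le_one)
    moreover have "(t + \<delta>)\<^sup>2 \<le> 2 * (t\<^sup>2 + \<delta>\<^sup>2)"
      using zero_le_power2[of "t - \<delta>"] by (simp add: power2_sum power2_diff)
    ultimately have "(t + \<delta>)\<^sup>2 \<le> 4 * (F + \<delta>\<^sup>2)"
      using \<open>0 \<le> F\<close> zero_le_power2[of \<delta>] unfolding distrib_left by linarith
    with True show ?thesis
      by (simp add: min_def)
  next
    case False
    then consider "1/2 \<le> \<delta>" | "1/2 \<le> t"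
      by linarith
    then have "1 \<le> 4 * (F + \<delta>\<^sup>2)"
    proof cases
      case 1
      then have "1/4 \<le> \<delta>\<^sup>2"
        using power_mono[of "1/2" \<delta> 2] by (simp add: power2_eq_square)
      with \<open>0 \<le> F\<close> show ?thesis
        unfolding distrib_left by linarith
    next
      case 2
      then have "1/4 \<le> min (t\<^sup>2) 1"
        using power_mono[of "1/2" t 2] by (simp add: power2_eq_square)
      with assms(3) zero_le_power2[of \<delta>] show ?thesis
        unfolding distrib_left by linarith
    qed
    with False show ?thesis
      by (simp add: min_def)
  qed
  show "(min (t + \<delta>) 1)\<^sup>2 \<le> 4 * (F + \<delta>)"
  proof (cases "\<delta> \<le> 1")
    case True
    then have "\<delta>\<^sup>2 \<le> \<delta>"
      using assms(2) by (simp add: power2_eq_square mult_left_le)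
    with * show ?thesis
      unfolding distrib_left by linarith
  next
    case False
    have "(min (t + \<delta>) 1)\<^sup>2 \<le> 1"
      using assms by (intro power_le_one) auto
    with False \<open>0 \<le> F\<close> show ?thesis
      unfolding distrib_left by linarith
  qed
qed

lemma increment_estimates:
  fixes f g h :: "'a::real_normed_vector \<Rightarrow> real"
  assumes f: "\<And>x. min ((norm x)\<^sup>2) 1 \<le> f x"
    and g: "\<And>z. 0 \<le> g z" "\<And>z. g z \<le> G * min (norm z) 2"
    and h: "\<And>z. 0 \<le> h z" "\<And>z. h z \<le> H"
    and "0 \<le> G" "0 < C2"
  shows "\<exists>C3>0. \<forall>\<delta>>0. \<forall>r\<in>{0..1}. \<forall>x y. norm y \<le> C2 * min (norm x + \<delta>) 1 \<longrightarrow>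
    norm y * g (x + r *\<^sub>R y) \<le> C3 * (f x + \<delta>) \<and> (norm y)\<^sup>2 * h (x + r *\<^sub>R y) \<le> C3 * (f x + \<delta>\<^sup>2)"
proof (intro exI conjI allI ballI impI)
  define K where "K = 4 * (G * C2 * (2 + C2) + C2\<^sup>2 * H)"
  have "0 \<le> H"
    using h order_trans by blast
  then have K: "4 * (G * C2 * (2 + C2)) \<le> K" "4 * (C2\<^sup>2 * H) \<le> K"
    using assms(6,7) by (simp_all add: K_def)
  then show "0 < K + 1"
    using assms(6,7) by (smt (verit) mult_nonneg_nonneg)
  fix \<delta> r :: real and x y :: 'a
  assume "0 < \<delta>" and r: "r \<in> {0..1}" and y: "norm y \<le> C2 * min (norm x + \<delta>) 1"
  define u where "u = min (norm x + \<delta>) 1"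
  define z where "z = x + r *\<^sub>R y"
  have "0 \<le> u"
    using \<open>0 < \<delta>\<close> by (simp add: u_def)
  have "0 \<le> f x"
    using f[of x] by (smt (verit) zero_le_power2)
  have u_sq: "u\<^sup>2 \<le> 4 * (f x + \<delta>\<^sup>2)" "u\<^sup>2 \<le> 4 * (f x + \<delta>)"
    unfolding u_def using sq_min_add_one_le[OF norm_ge_zero \<open>0 < \<delta>\<close> f] by auto
  have "norm z \<le> norm x + norm y"
    using r norm_triangle_ineq[of x "r *\<^sub>R y"] mult_left_le_one_le[of "norm y" r]
    by (auto simp: z_def)
  then have z: "min (norm z) 2 \<le> (2 + C2) * u"
  proof (cases "norm x + \<delta> \<le> 1")
    case True
    then have "norm z \<le> u + C2 * u"
      using y \<open>norm z \<le> norm x + norm y\<close> \<open>0 < \<delta>\<close> by (simp add: u_def)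
    with \<open>0 \<le> u\<close> show ?thesis
      by (simp add: algebra_simps)
  qed (use assms(7) in \<open>simp add: u_def\<close>)
  then have "g z \<le> G * ((2 + C2) * u)"
    using g(2)[of z] mult_left_mono[OF _ assms(6)] by (meson order_trans)
  then have "norm y * g z \<le> (C2 * u) * (G * ((2 + C2) * u))"
    using y g(1) assms(7) \<open>0 \<le> u\<close> by (intro mult_mono) (auto simp: u_def)
  also have "\<dots> = G * C2 * (2 + C2) * u\<^sup>2"
    by (simp add: power2_eq_square algebra_simps)
  also have "\<dots> \<le> G * C2 * (2 + C2) * (4 * (f x + \<delta>))"
    using u_sq(2) assms(6,7) by (intro mult_left_mono) auto
  also have "\<dots> = 4 * (G * C2 * (2 + C2)) * (f x + \<delta>)"
    by simp
  also have "\<dots> \<le> (K + 1) * (f x + \<delta>)"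
    using K(1) \<open>0 \<le> f x\<close> \<open>0 < \<delta>\<close> by (intro mult_right_mono) auto
  finally show "norm y * g (x + r *\<^sub>R y) \<le> (K + 1) * (f x + \<delta>)"
    by (simp add: z_def)
  have "(norm y)\<^sup>2 * h z \<le> (C2 * u)\<^sup>2 * H"
    using y \<open>0 \<le> u\<close> h \<open>0 \<le> H\<close> by (intro mult_mono power_mono) (auto simp: u_def)
  also have "\<dots> = C2\<^sup>2 * H * u\<^sup>2"
    by (simp add: power_mult_distrib)
  also have "\<dots> \<le> C2\<^sup>2 * H * (4 * (f x + \<delta>\<^sup>2))"
    using u_sq(1) \<open>0 \<le> H\<close> by (intro mult_left_mono) auto
  also have "\<dots> = 4 * (C2\<^sup>2 * H) * (f x + \<delta>\<^sup>2)"
    by simp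
  also have "\<dots> \<le> (K + 1) * (f x + \<delta>\<^sup>2)"
    using K(2) \<open>0 \<le> f x\<close> by (intro mult_right_mono) auto
  finally show "(norm y)\<^sup>2 * h (x + r *\<^sub>R y) \<le> (K + 1) * (f x + \<delta>\<^sup>2)"
    by (simp add: z_def)
qed

lemma grad_norm_nonneg: "0 \<le> grad_norm g x"
  by (simp add: grad_norm_def sum_nonneg)

lemma hess_norm_nonneg: "0 \<le> hess_norm g x"
  by (simp add: hess_norm_def sum_nonneg)

lemma trunc_sq_nonneg: "0 \<le> trunc_sq x"
  using min_le_trunc_sq[of x] by (smt (verit) zero_le_power2)

lemma trunc_sq_grad_hess_le_indicator:
  "\<exists>C1>0. \<forall>x::'a::euclidean_space.
     grad_norm trunc_sq x + hess_norm trunc_sq x \<le> C1 * indicator {z. norm z \<le> 2} x"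
proof -
  obtain G H where "0 \<le> G" "0 \<le> H"
    and grad: "\<And>z::'a. grad_norm trunc_sq z \<le> G * min (norm z) 2 * indicator {z. norm z \<le> 2} z"
    and hess: "\<And>z::'a. hess_norm trunc_sq z \<le> H * indicator {z. norm z \<le> 2} z"
    using trunc_sq_derivative_bounds by blast
  have "grad_norm trunc_sq x + hess_norm trunc_sq x \<le> (2 * G + H + 1) * indicator {z. norm z \<le> 2} x"
    for x :: 'a
  proof (cases "norm x \<le> 2")
    case True
    have "grad_norm trunc_sq x \<le> 2 * G"
      using True grad[of x] mult_left_mono[of "min (norm x) 2" 2 G] \<open>0 \<le> G\<close> by simp
    with True hess[of x] show ?thesis
      by (simp add: indicator_def)
  next
    case False
    with grad[of x] hess[of x] show ?thesis
      by (simp add: indicator_def)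
  qed
  moreover have "0 < 2 * G + H + 1"
    using \<open>0 \<le> G\<close> \<open>0 \<le> H\<close> by simp
  ultimately show ?thesis
    by blast
qed

lemma trunc_sq_increment_estimates:
  "\<forall>C2>0. \<exists>C3>0. \<forall>\<delta>>0. \<forall>r\<in>{0..1}. \<forall>x y::'a::euclidean_space.
     norm y \<le> C2 * min (norm x + \<delta>) 1 \<longrightarrow>
       norm y * grad_norm trunc_sq (x + r *\<^sub>R y) \<le> C3 * (trunc_sq x + \<delta>) \<and>
       (norm y)\<^sup>2 * hess_norm trunc_sq (x + r *\<^sub>R y) \<le> C3 * (trunc_sq x + \<delta>\<^sup>2)"
proof -
  obtain G H where "0 \<le> G" "0 \<le> H"
    and grad: "\<And>z::'a. grad_norm trunc_sq z \<le> G * min (norm z) 2 * indicator {z. norm z \<le> 2} z"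
    and hess: "\<And>z::'a. hess_norm trunc_sq z \<le> H * indicator {z. norm z \<le> 2} z"
    using trunc_sq_derivative_bounds by blast
  have grad_le: "grad_norm trunc_sq z \<le> G * min (norm z) 2" for z :: 'a
    using grad[of z] \<open>0 \<le> G\<close> by (cases "norm z \<le> 2") (simp_all add: indicator_def)
  have hess_le: "hess_norm trunc_sq z \<le> H" for z :: 'a
    using hess[of z] \<open>0 \<le> H\<close> by (cases "norm z \<le> 2") (simp_all add: indicator_def)
  show ?thesis
    by (intro allI impI increment_estimates[OF min_le_trunc_sq grad_norm_nonneg grad_le
          hess_norm_nonneg hess_le \<open>0 \<le> G\<close>])
qed

theorem lemma5p2:
  shows "\<exists>f :: 'a::euclidean_space \<Rightarrow> real.
     smooth_fun f \<and>
     (\<forall>x. 0 \<le> f x) \<and>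
     (\<forall>x. norm x \<le> 1 \<longrightarrow> f x = (norm x)\<^sup>2) \<and>
     (\<forall>x. norm x \<ge> 2 \<longrightarrow> f x = 2) \<and>
     (\<exists>C1>0. \<forall>x. grad_norm f x + hess_norm f x \<le> C1 * indicator {z. norm z \<le> 2} x) \<and>
     (\<forall>C2>0. \<exists>C3>0. \<forall>\<delta>>0. \<forall>r\<in>{0..1}. \<forall>x y.
        norm y \<le> C2 * min (norm x + \<delta>) 1 \<longrightarrow>
          norm y * grad_norm f (x + r *\<^sub>R y) \<le> C3 * (f x + \<delta>) \<and>
          (norm y)\<^sup>2 * hess_norm f (x + r *\<^sub>R y) \<le> C3 * (f x + \<delta>\<^sup>2))"
  using smooth_fun_trunc_sq trunc_sq_nonneg trunc_sq_eq_norm_sq trunc_sq_eq_2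
    trunc_sq_grad_hess_le_indicator trunc_sq_increment_estimates
  by (intro exI[of _ trunc_sq] conjI allI impI) blast+

end
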